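(* Let $I=\langle Q,D,\tau_{in},\tau_{out}\rangle$ be an instance of DTP where $Q$ is nonrecursive, connected, and contains no rigid atoms. Let $a$ be the maximum radius of a rule of $\Pi_Q$, and let $\mathbf T$ be the set consisting of $\tau_{out}$ and all time points occurring in $\Pi_Q$. Let $U$ be a $\tau_{in}$-update involving only objects in $C_I$, let $P$ be a predicate of $\Pi_Q$, $\vec o$ a tuple of objects and $\tau$ a time point such that $\Pi_Q\cup D\cup U\models P(\vec o,\tau)$ and $|\tau-\tau'|\le a\cdot(\mathrm{rank}(\Pi_Q)-\mathrm{rank}(P))$ for some $\tau'\in\mathbf T$. Then $\Pi_Q\cup D\cup B_I\models P(\vec o,\tau)$, where $B_I$ is the bounded critical update of $I$.
   Context: Temporal Datalog. Constants are partitioned into objects and integer time points; variables into object variables and time variables. A time term is a time point, a time variable, or an expression $t+k$ with $t$ a time variable and $k\in\mathbb{Z}$. Each predicate is either extensional (EDB) or intensional (IDB) and has an arity $n\ge0$, each position being of object sort or time sort; a predicate is rigid if all its positions are of object sort, and temporal if its last position is of time sort and all others are of object sort. An atom $P(t_1,\dots,t_n)$ has terms of the required sorts. A rule is $\bigwedge_i\alpha_i\to\alpha$ with $\alpha$ and all $\alpha_i$ rigid or temporal atoms, $\alpha$ IDB whenever the body is nonempty, and every head variable occurring in the body. A program is a finite set of rules. A fact is a ground rigid or temporal atom without $+$ (identified with the rule $\top\to\alpha$); a dataset is a finite set of EDB facts. Rules are read as universally quantified first-order sentences with $+$ interpreted as integer addition; $\Pi\models\alpha$ denotes entailment. A query is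 $Q=\langle P_Q,\Pi_Q\rangle$ with $\Pi_Q$ a program and $P_Q$ an IDB predicate of $\Pi_Q$; it is temporal if $P_Q$ is temporal. For a temporal query $Q$, dataset $D$ and time point $\tau$, $Q(D,\tau)$ is the set of tuples of objects $\vec o$ with $\Pi_Q\cup D\models P_Q(\vec o,\tau)$. A $\tau_{in}$-history is a dataset consisting of rigid facts and temporal facts with time argument $\le\tau_{in}$; a $\tau_{in}$-update is a dataset consisting of temporal facts with time argument $>\tau_{in}$. Definitive Time Point (DTP): an instance is $\langle Q,D,\tau_{in},\tau_{out}\rangle$ with $Q$ a temporal query, $D$ a $\tau_{in}$-history and $\tau_{out}\le\tau_{in}$; DTP holds for it iff $Q(D,\tau_{out})=Q(D\cup U,\tau_{out})$ for every $\tau_{in}$-update $U$. Critical domain: $C_I$ is the set of all objects occurring in $\Pi_Q\cup D$ together with one fresh object $o_I$. Predicate $P$ depends on $P'$ in $\Pi$ if some rule of $\Pi$ has $P$ in the head and $P'$ in the body; $\Pi$ (or a query with program $\Pi$) is nonrecursive if the graph of this dependency relation is acyclic. $\mathrm{rank}(P)=\mathrm{rank}(P,\Pi)$ is $0$ if $P$ does not occur in a rule head of $\Pi$, and otherwise the maximum of $\mathrm{rank}(P')+1$ over predicates $P'$ on which $P$ depends; $\mathrm{rank}(\Pi)$ is the maximum rank of a predicate of $\Pi$. A rule is connected if it contains at most one time variable and, if a time variable occurs in the body, it also occurs in the head; a query is connected if all its rules are. For a time term $s$, $\Delta(s)=k$ if $s=t+k$ with $t$ a variable, and $\Delta(s)=0$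 otherwise. The radius of a connected rule $r$ mentioning a time variable is the maximum of $|\Delta(s)-\Delta(s')|$ where $s$ is the time argument of the head and $s'$ the time argument of a body atom of $r$. The radius $\mathrm{rad}(\Pi)$ of a connected program is the number of rules of $\Pi$ times the maximum radius of a rule of $\Pi$; $\mathrm{rad}(Q)=\mathrm{rad}(\Pi_Q)$. Bounded critical update: let $\tau_0$ be the maximum of $\tau_{out}$ and the largest time point occurring in $\Pi_Q$; a time point $\tau$ is critical for $I$ if $\tau_{in}<\tau\le\tau_0+\mathrm{rad}(\Pi_Q)$; $B_I$ consists of all facts $P(\vec o,\tau)$ with $P$ a temporal EDB predicate of $\Pi_Q$, $\vec o$ a tuple over $C_I$ and $\tau$ critical. *)

theory Defs
  imports Main
begin

datatype 'o oterm = OVar nat | OConst 'o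

datatype tterm = TConst int | TVar nat | TShift nat int

text \<open>Rigid atoms have time argument None, temporal atoms Some s.\<close>
datatype ('p,'o) atom = Atom 'p "'o oterm list" "tterm option"

type_synonym ('p,'o) rule = "('p,'o) atom list \<times> ('p,'o) atom"

type_synonym ('p,'o) fact = "'p \<times> 'o list \<times> int option"

text \<open>Signature: sig P = (number of object positions, is temporal).\<close>
type_synonym 'p signature = "'p \<Rightarrow> nat \<times> bool"

fun apred :: "('p,'o) atom \<Rightarrow> 'p" where "apred (Atom P ts t) = P"
fun atargs :: "('p,'o) atom \<Rightarrow> tterm option" where "atargs (Atom P ts t) = t"

fun tt_vars :: "tterm \<Rightarrow> nat set" where
  "tt_vars (TConst k) = {}" | "tt_vars (TVar x) = {x}" | "tt_vars (TShift x k) = {x}"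
fun tt_consts :: "tterm \<Rightarrow> int set" where
  "tt_consts (TConst k) = {k}" | "tt_consts (TVar x) = {}" | "tt_consts (TShift x k) = {}"
fun ot_vars :: "'o oterm \<Rightarrow> nat set" where
  "ot_vars (OVar x) = {x}" | "ot_vars (OConst c) = {}"
fun ot_consts :: "'o oterm \<Rightarrow> 'o set" where
  "ot_consts (OVar x) = {}" | "ot_consts (OConst c) = {c}"

fun atom_ovars :: "('p,'o) atom \<Rightarrow> nat set" where
  "atom_ovars (Atom P ts t) = (\<Union>s\<in>set ts. ot_vars s)"
fun atom_tvars :: "('p,'o) atom \<Rightarrow> nat set" where
  "atom_tvars (Atom P ts t) = (case t of None \<Rightarrow> {} | Some s \<Rightarrow> tt_vars s)"
fun atom_objs :: "('p,'o) atom \<Rightarrow> 'o set" where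
  "atom_objs (Atom P ts t) = (\<Union>s\<in>set ts. ot_consts s)"
fun atom_tpoints :: "('p,'o) atom \<Rightarrow> int set" where
  "atom_tpoints (Atom P ts t) = (case t of None \<Rightarrow> {} | Some s \<Rightarrow> tt_consts s)"

definition rule_atoms :: "('p,'o) rule \<Rightarrow> ('p,'o) atom set" where
  "rule_atoms r = insert (snd r) (set (fst r))"

definition body_tvars :: "('p,'o) rule \<Rightarrow> nat set" where
  "body_tvars r = (\<Union>b\<in>set (fst r). atom_tvars b)"
definition body_ovars :: "('p,'o) rule \<Rightarrow> nat set" where
  "body_ovars r = (\<Union>b\<in>set (fst r). atom_ovars b)"
definition rule_tvars :: "('p,'o) rule \<Rightarrow> nat set" where
  "rule_tvars r = (\<Union>a\<in>rule_atoms r. atom_tvars a)"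

definition prog_atoms :: "('p,'o) rule set \<Rightarrow> ('p,'o) atom set" where
  "prog_atoms \<Pi> = (\<Union>r\<in>\<Pi>. rule_atoms r)"
definition preds :: "('p,'o) rule set \<Rightarrow> 'p set" where
  "preds \<Pi> = apred ` prog_atoms \<Pi>"
definition prog_objs :: "('p,'o) rule set \<Rightarrow> 'o set" where
  "prog_objs \<Pi> = (\<Union>a\<in>prog_atoms \<Pi>. atom_objs a)"
definition prog_tpoints :: "('p,'o) rule set \<Rightarrow> int set" where
  "prog_tpoints \<Pi> = (\<Union>a\<in>prog_atoms \<Pi>. atom_tpoints a)"
definition data_objs :: "('p,'o) fact set \<Rightarrow> 'o set" where
  "data_objs D = (\<Union>f\<in>D. set (fst (snd f)))"

fun wf_atom :: "'p signature \<Rightarrow> ('p,'o) atom \<Rightarrow> bool" where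
  "wf_atom sig (Atom P ts t) \<longleftrightarrow> length ts = fst (sig P) \<and> (t \<noteq> None \<longleftrightarrow> snd (sig P))"

definition wf_rule :: "'p signature \<Rightarrow> ('p \<Rightarrow> bool) \<Rightarrow> ('p,'o) rule \<Rightarrow> bool" where
  "wf_rule sig edb r \<longleftrightarrow> (\<forall>a\<in>rule_atoms r. wf_atom sig a)
     \<and> (fst r \<noteq> [] \<longrightarrow> \<not> edb (apred (snd r)))
     \<and> atom_ovars (snd r) \<subseteq> body_ovars r
     \<and> atom_tvars (snd r) \<subseteq> body_tvars r"

definition program :: "'p signature \<Rightarrow> ('p \<Rightarrow> bool) \<Rightarrow> ('p,'o) rule set \<Rightarrow> bool" where
  "program sig edb \<Pi> \<longleftrightarrow> finite \<Pi> \<and> (\<forall>r\<in>\<Pi>. wf_rule sig edb r)"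

definition wf_fact :: "'p signature \<Rightarrow> ('p,'o) fact \<Rightarrow> bool" where
  "wf_fact sig f \<longleftrightarrow> (case f of (P, os, t) \<Rightarrow>
      length os = fst (sig P) \<and> (t \<noteq> None \<longleftrightarrow> snd (sig P)))"

definition dataset :: "'p signature \<Rightarrow> ('p \<Rightarrow> bool) \<Rightarrow> ('p,'o) fact set \<Rightarrow> bool" where
  "dataset sig edb D \<longleftrightarrow> finite D \<and> (\<forall>f\<in>D. wf_fact sig f \<and> edb (fst f))"

definition history :: "'p signature \<Rightarrow> ('p \<Rightarrow> bool) \<Rightarrow> int \<Rightarrow> ('p,'o) fact set \<Rightarrow> bool" where
  "history sig edb \<tau>in D \<longleftrightarrow> dataset sig edb D \<and>
     (\<forall>(P, os, t)\<in>D. \<forall>\<tau>. t = Some \<tau> \<longrightarrow> \<tau> \<le> \<tau>in)"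

definition update :: "'p signature \<Rightarrow> ('p \<Rightarrow> bool) \<Rightarrow> int \<Rightarrow> ('p,'o) fact set \<Rightarrow> bool" where
  "update sig edb \<tau>in U \<longleftrightarrow> dataset sig edb U \<and>
     (\<forall>(P, os, t)\<in>U. \<exists>\<tau>. t = Some \<tau> \<and> \<tau>in < \<tau>)"

definition temporal_query :: "'p signature \<Rightarrow> ('p \<Rightarrow> bool) \<Rightarrow> 'p \<Rightarrow> ('p,'o) rule set \<Rightarrow> bool" where
  "temporal_query sig edb PQ \<Pi> \<longleftrightarrow> program sig edb \<Pi> \<and> PQ \<in> preds \<Pi> \<and> \<not> edb PQ \<and> snd (sig PQ)"

definition DTP_instance :: "'p signature \<Rightarrow> ('p \<Rightarrow> bool) \<Rightarrow> 'p \<Rightarrow> ('p,'o) rule set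
    \<Rightarrow> ('p,'o) fact set \<Rightarrow> int \<Rightarrow> int \<Rightarrow> bool" where
  "DTP_instance sig edb PQ \<Pi> D \<tau>in \<tau>out \<longleftrightarrow>
     temporal_query sig edb PQ \<Pi> \<and> history sig edb \<tau>in D \<and> \<tau>out \<le> \<tau>in"

fun eval_o :: "(nat \<Rightarrow> 'o) \<Rightarrow> 'o oterm \<Rightarrow> 'o" where
  "eval_o ov (OVar x) = ov x" | "eval_o ov (OConst c) = c"
fun eval_t :: "(nat \<Rightarrow> int) \<Rightarrow> tterm \<Rightarrow> int" where
  "eval_t tv (TConst k) = k" | "eval_t tv (TVar x) = tv x" | "eval_t tv (TShift x k) = tv x + k"
fun eval_atom :: "(nat \<Rightarrow> 'o) \<Rightarrow> (nat \<Rightarrow> int) \<Rightarrow> ('p,'o) atom \<Rightarrow> ('p,'o) fact" where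
  "eval_atom ov tv (Atom P ts t) = (P, map (eval_o ov) ts, map_option (eval_t tv) t)"

text \<open>An (Herbrand) interpretation is a set of ground facts; it satisfies a program if it is
  closed under all ground instances of its rules (integer time domain, + as addition).\<close>
definition satisfies :: "('p,'o) fact set \<Rightarrow> ('p,'o) rule set \<Rightarrow> bool" where
  "satisfies I \<Pi> \<longleftrightarrow> (\<forall>r\<in>\<Pi>. \<forall>ov tv.
      (\<forall>b\<in>set (fst r). eval_atom ov tv b \<in> I) \<longrightarrow> eval_atom ov tv (snd r) \<in> I)"

definition entails :: "('p,'o) rule set \<Rightarrow> ('p,'o) fact set \<Rightarrow> ('p,'o) fact \<Rightarrow> bool" where
  "entails \<Pi> D f \<longleftrightarrow> (\<forall>I. satisfies I \<Pi> \<and> D \<subseteq> I \<longrightarrow> f \<in> I)"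

definition depends :: "('p,'o) rule set \<Rightarrow> 'p \<Rightarrow> 'p \<Rightarrow> bool" where
  "depends \<Pi> P P' \<longleftrightarrow> (\<exists>r\<in>\<Pi>. apred (snd r) = P \<and> P' \<in> apred ` set (fst r))"

definition nonrecursive :: "('p,'o) rule set \<Rightarrow> bool" where
  "nonrecursive \<Pi> \<longleftrightarrow> acyclic {(P, P'). depends \<Pi> P P'}"

definition is_rank :: "('p,'o) rule set \<Rightarrow> ('p \<Rightarrow> nat) \<Rightarrow> bool" where
  "is_rank \<Pi> f \<longleftrightarrow> (\<forall>P. f P = Max (insert 0 {f P' + 1 | P'. depends \<Pi> P P'}))"

definition rank :: "('p,'o) rule set \<Rightarrow> 'p \<Rightarrow> nat" where
  "rank \<Pi> = (THE f. is_rank \<Pi> f)"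

definition prog_rank :: "('p,'o) rule set \<Rightarrow> nat" where
  "prog_rank \<Pi> = Max (insert 0 (rank \<Pi> ` preds \<Pi>))"

definition connected_rule :: "('p,'o) rule \<Rightarrow> bool" where
  "connected_rule r \<longleftrightarrow> card (rule_tvars r) \<le> 1 \<and> body_tvars r \<subseteq> atom_tvars (snd r)"

definition connected :: "('p,'o) rule set \<Rightarrow> bool" where
  "connected \<Pi> \<longleftrightarrow> (\<forall>r\<in>\<Pi>. connected_rule r)"

definition no_rigid_atoms :: "('p,'o) rule set \<Rightarrow> bool" where
  "no_rigid_atoms \<Pi> \<longleftrightarrow> (\<forall>a\<in>prog_atoms \<Pi>. atargs a \<noteq> None)"

fun delta :: "tterm \<Rightarrow> int" where
  "delta (TShift x k) = k" | "delta (TConst k) = 0" | "delta (TVar x) = 0"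

definition radius :: "('p,'o) rule \<Rightarrow> int" where
  "radius r = Max (insert 0 {\<bar>delta s - delta s'\<bar> | s s' b.
      atargs (snd r) = Some s \<and> b \<in> set (fst r) \<and> atargs b = Some s'})"

definition max_radius :: "('p,'o) rule set \<Rightarrow> int" where
  "max_radius \<Pi> = Max (insert 0 (radius ` {r\<in>\<Pi>. rule_tvars r \<noteq> {}}))"

definition rad :: "('p,'o) rule set \<Rightarrow> int" where
  "rad \<Pi> = int (card \<Pi>) * max_radius \<Pi>"

definition crit_domain :: "('p,'o) rule set \<Rightarrow> ('p,'o) fact set \<Rightarrow> 'o \<Rightarrow> 'o set" where
  "crit_domain \<Pi> D oI = insert oI (prog_objs \<Pi> \<union> data_objs D)"

definition tau0 :: "('p,'o) rule set \<Rightarrow> int \<Rightarrow> int" where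
  "tau0 \<Pi> \<tau>out = Max (insert \<tau>out (prog_tpoints \<Pi>))"

definition critical :: "('p,'o) rule set \<Rightarrow> int \<Rightarrow> int \<Rightarrow> int \<Rightarrow> bool" where
  "critical \<Pi> \<tau>in \<tau>out \<tau> \<longleftrightarrow> \<tau>in < \<tau> \<and> \<tau> \<le> tau0 \<Pi> \<tau>out + rad \<Pi>"

definition bounded_update :: "'p signature \<Rightarrow> ('p \<Rightarrow> bool) \<Rightarrow> ('p,'o) rule set
    \<Rightarrow> ('p,'o) fact set \<Rightarrow> int \<Rightarrow> int \<Rightarrow> 'o \<Rightarrow> ('p,'o) fact set" where
  "bounded_update sig edb \<Pi> D \<tau>in \<tau>out oI =
     {(P, os, Some \<tau>) | P os \<tau>. P \<in> preds \<Pi> \<and> edb P \<and> snd (sig P) \<and>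
        length os = fst (sig P) \<and> set os \<subseteq> crit_domain \<Pi> D oI \<and> critical \<Pi> \<tau>in \<tau>out \<tau>}"

end

theory Submission
  imports Defs
begin

text \<open>Along a derivation from \<open>D \<union> U\<close>, each rule application passes from a head predicate to
  body predicates of strictly smaller rank and, the rule being connected, moves the time point by
  at most the maximal radius \<open>a\<close>, unless the body time is a constant of the program. So if the
  derived fact \<open>P(\<tau>)\<close> lies within \<open>a \<cdot> (rank \<Pi> - rank P)\<close> of a point of \<open>T\<close>, then by induction
  every fact of its derivation lies within \<open>a \<cdot> rank \<Pi> \<le> a \<cdot> |\<Pi>| = rad \<Pi>\<close> of \<open>T\<close>. The facts of
  \<open>U\<close> used therefore have critical time points and belong to the bounded critical update.\<close>

inductive derivable :: "('p,'o) rule set \<Rightarrow> ('p,'o) fact set \<Rightarrow> ('p,'o) fact \<Rightarrow> bool"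
  for \<Pi> S where
  base: "f \<in> S \<Longrightarrow> derivable \<Pi> S f"
| step: "r \<in> \<Pi> \<Longrightarrow> \<forall>b\<in>set (fst r). derivable \<Pi> S (eval_atom ov tv b)
          \<Longrightarrow> derivable \<Pi> S (eval_atom ov tv (snd r))"

lemma entails_iff_derivable: "entails \<Pi> S f \<longleftrightarrow> derivable \<Pi> S f"
proof
  assume "entails \<Pi> S f"
  moreover have "satisfies {f. derivable \<Pi> S f} \<Pi>"
    unfolding satisfies_def by (auto intro: derivable.step)
  ultimately show "derivable \<Pi> S f"
    unfolding entails_def by (auto intro: derivable.base)
next
  assume "derivable \<Pi> S f"
  then have "f \<in> I" if "satisfies I \<Pi>" and "S \<subseteq> I" for I
    using that by induction (auto simp: satisfies_def)
  then show "entails \<Pi> S f"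
    unfolding entails_def by blast
qed

lemma derivable_mono: "derivable \<Pi> S f \<Longrightarrow> S \<subseteq> S' \<Longrightarrow> derivable \<Pi> S' f"
  by (induction rule: derivable.induct) (auto intro: derivable.intros)

lemma finite_prog_atoms: "finite \<Pi> \<Longrightarrow> finite (prog_atoms \<Pi>)"
  by (simp add: prog_atoms_def rule_atoms_def)

lemma finite_preds: "finite \<Pi> \<Longrightarrow> finite (preds \<Pi>)"
  by (simp add: preds_def finite_prog_atoms)

lemma finite_atom_tpoints: "finite (atom_tpoints a)"
proof -
  have "finite (tt_consts s)" for s by (cases s) auto
  then show ?thesis by (cases a) (auto split: option.splits)
qed

lemma finite_prog_tpoints: "finite \<Pi> \<Longrightarrow> finite (prog_tpoints \<Pi>)"
  by (simp add: prog_tpoints_def finite_prog_atoms finite_atom_tpoints)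

lemma depends_preds:
  assumes "depends \<Pi> P P'" shows "P \<in> preds \<Pi>" "P' \<in> preds \<Pi>"
  using assms unfolding depends_def preds_def prog_atoms_def rule_atoms_def by force+

lemma finite_depends: "finite \<Pi> \<Longrightarrow> finite {(P, P'). depends \<Pi> P P'}"
  by (rule finite_subset[of _ "preds \<Pi> \<times> preds \<Pi>"]) (auto dest: depends_preds simp: finite_preds)

lemma finite_rank_successors:
  "finite \<Pi> \<Longrightarrow> finite (insert 0 {f P' + 1 | P'. depends \<Pi> P P'})"
  by (rule finite_subset[of _ "insert 0 ((\<lambda>Q. f Q + 1) ` preds \<Pi>)"])
    (auto dest: depends_preds simp: finite_preds)

lemma wf_converse_depends:
  "finite \<Pi> \<Longrightarrow> nonrecursive \<Pi> \<Longrightarrow> wf ({(P, P'). depends \<Pi> P P'}\<inverse>)"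
  unfolding nonrecursive_def by (blast intro: finite_acyclic_wf_converse finite_depends)

lemma ex_is_rank:
  fixes \<Pi> :: "('p,'o) rule set"
  assumes "finite \<Pi>" and "nonrecursive \<Pi>"
  shows "\<exists>f. is_rank \<Pi> f"
proof -
  let ?R = "{(P, P'). depends \<Pi> P P'}\<inverse>"
  define F where "F = (\<lambda>(f::'p \<Rightarrow> nat) P. Max (insert 0 {f P' + 1 | P'. depends \<Pi> P P'}))"
  have "adm_wf ?R F"
    unfolding adm_wf_def
  proof (intro allI impI)
    fix f g :: "'p \<Rightarrow> nat" and P
    assume "\<forall>P'. (P', P) \<in> ?R \<longrightarrow> f P' = g P'"
    then have agree: "f P' = g P'" if "depends \<Pi> P P'" for P'
      using that by simp
    have "{f P' + 1 | P'. depends \<Pi> P P'} = {g P' + 1 | P'. depends \<Pi> P P'}"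
      unfolding setcompr_eq_image by (rule image_cong[OF refl]) (simp add: agree)
    then show "F f P = F g P"
      unfolding F_def by simp
  qed
  then have "wfrec ?R F = F (wfrec ?R F)"
    by (rule wfrec_fixpoint[OF wf_converse_depends[OF assms]])
  then have "is_rank \<Pi> (wfrec ?R F)"
    unfolding is_rank_def by (metis F_def)
  then show ?thesis by blast
qed

lemma is_rank_unique:
  assumes "finite \<Pi>" and "nonrecursive \<Pi>" and f: "is_rank \<Pi> f" and g: "is_rank \<Pi> g"
  shows "f = g"
proof
  fix P
  show "f P = g P"
    using wf_converse_depends[OF assms(1,2)]
  proof (induction P rule: wf_induct_rule)
    case (less P)
    then have agree: "f P' = g P'" if "depends \<Pi> P P'" for P'
      using that by simp
    have "{f P' + 1 | P'. depends \<Pi> P P'} = {g P' + 1 | P'. depends \<Pi> P P'}"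
      unfolding setcompr_eq_image by (rule image_cong[OF refl]) (simp add: agree)
    moreover have "f P = Max (insert 0 {f P' + 1 | P'. depends \<Pi> P P'})"
      and "g P = Max (insert 0 {g P' + 1 | P'. depends \<Pi> P P'})"
      using f g unfolding is_rank_def by blast+
    ultimately show ?case
      by simp
  qed
qed

lemma rank_is_rank:
  assumes "finite \<Pi>" and "nonrecursive \<Pi>"
  shows "is_rank \<Pi> (rank \<Pi>)"
proof -
  have "\<exists>!f. is_rank \<Pi> f"
    using ex_is_rank[OF assms] is_rank_unique[OF assms] by blast
  then show ?thesis
    unfolding rank_def by (rule theI')
qed

lemma rank_eq_Max:
  assumes "finite \<Pi>" and "nonrecursive \<Pi>"
  shows "rank \<Pi> P = Max (insert 0 {rank \<Pi> P' + 1 | P'. depends \<Pi> P P'})"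
  using rank_is_rank[OF assms] unfolding is_rank_def by (rule spec)

lemma rank_depends:
  assumes "finite \<Pi>" and "nonrecursive \<Pi>" and "depends \<Pi> P P'"
  shows "rank \<Pi> P' < rank \<Pi> P"
proof -
  have "rank \<Pi> P' + 1 \<le> Max (insert 0 {rank \<Pi> P' + 1 | P'. depends \<Pi> P P'})"
    using assms(3) by (intro Max_ge finite_rank_successors[OF assms(1)]) blast
  then show ?thesis
    unfolding rank_eq_Max[OF assms(1,2), of P] by simp
qed

lemma rank_cases:
  assumes "finite \<Pi>" and "nonrecursive \<Pi>"
  obtains "rank \<Pi> P = 0" | P' where "depends \<Pi> P P'" and "rank \<Pi> P = rank \<Pi> P' + 1"
proof -
  have "rank \<Pi> P \<in> insert 0 {rank \<Pi> P' + 1 | P'. depends \<Pi> P P'}"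
    unfolding rank_eq_Max[OF assms, of P] by (intro Max_in finite_rank_successors[OF assms(1)]) simp
  then show ?thesis
    using that by blast
qed

text \<open>The set of rules whose head is reachable from \<open>P\<close> in the dependency graph shrinks strictly
  along each dependency edge, by acyclicity, and its size bounds the rank.\<close>

lemma rank_le_card:
  assumes fin: "finite \<Pi>" and nr: "nonrecursive \<Pi>"
  shows "rank \<Pi> P \<le> card \<Pi>"
proof -
  let ?R = "{(P, P'). depends \<Pi> P P'}"
  define A where "A Q = {r\<in>\<Pi>. (Q, apred (snd r)) \<in> ?R\<^sup>*}" for Q
  have "rank \<Pi> P \<le> card (A P)"
    using wf_converse_depends[OF fin nr]
  proof (induction P rule: wf_induct_rule)
    case (less P)
    from fin nr show ?case
    proof (cases rule: rank_cases[where P = P])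
      case (2 P')
      then obtain r where r: "r \<in> \<Pi>" "apred (snd r) = P" "P' \<in> apred ` set (fst r)"
        unfolding depends_def by blast
      have "r \<notin> A P'"
      proof
        assume "r \<in> A P'"
        with r 2 have "(P, P) \<in> ?R\<^sup>+" unfolding A_def by (auto intro: rtrancl_into_trancl2)
        with nr show False unfolding nonrecursive_def acyclic_def by blast
      qed
      moreover have "A P' \<subseteq> A P" "r \<in> A P"
        using 2 r unfolding A_def by (auto intro: converse_rtrancl_into_rtrancl)
      ultimately have "card (A P') < card (A P)"
        using fin unfolding A_def by (intro psubset_card_mono) auto
      with 2 less show ?thesis by fastforce
    qed simp
  qed
  also have "card (A P) \<le> card \<Pi>"
    using fin unfolding A_def by (intro card_mono) auto
  finally show ?thesis .
qed

lemma rank_le_prog_rank: "finite \<Pi> \<Longrightarrow> P \<in> preds \<Pi> \<Longrightarrow> rank \<Pi> P \<le> prog_rank \<Pi>"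
  unfolding prog_rank_def by (simp add: finite_preds)

lemma prog_rank_le_card: "finite \<Pi> \<Longrightarrow> nonrecursive \<Pi> \<Longrightarrow> prog_rank \<Pi> \<le> card \<Pi>"
  unfolding prog_rank_def by (simp add: finite_preds rank_le_card)

lemma eval_t_tvar: "x \<in> tt_vars s \<Longrightarrow> eval_t tv s = tv x + delta s"
  by (cases s) auto

lemma delta_diff_le_radius:
  assumes "atargs (snd r) = Some s" and "b \<in> set (fst r)" and "atargs b = Some s'"
  shows "\<bar>delta s - delta s'\<bar> \<le> radius r"
proof -
  have "{\<bar>delta s - delta s'\<bar> | s s' b.
      atargs (snd r) = Some s \<and> b \<in> set (fst r) \<and> atargs b = Some s'}
    \<subseteq> (\<lambda>b. \<bar>delta (the (atargs (snd r))) - delta (the (atargs b))\<bar>) ` set (fst r)"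
    by force
  then show ?thesis
    unfolding radius_def using assms by (intro Max_ge) (auto intro: finite_subset)
qed

lemma radius_le_max_radius:
  "finite \<Pi> \<Longrightarrow> r \<in> \<Pi> \<Longrightarrow> rule_tvars r \<noteq> {} \<Longrightarrow> radius r \<le> max_radius \<Pi>"
  unfolding max_radius_def by (intro Max_ge) auto

lemma max_radius_nonneg: "finite \<Pi> \<Longrightarrow> 0 \<le> max_radius \<Pi>"
  unfolding max_radius_def by (intro Max_ge) auto

lemma connected_body_time_near_head:
  assumes fin: "finite \<Pi>" and conn: "connected \<Pi>" and r: "r \<in> \<Pi>"
    and head: "atargs (snd r) = Some s" and b: "b \<in> set (fst r)" and body: "atargs b = Some s'"
    and x: "x \<in> tt_vars s'"
  shows "\<bar>eval_t tv s' - eval_t tv s\<bar> \<le> max_radius \<Pi>"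
proof -
  have "atom_tvars b = tt_vars s'"
    using body by (cases b) auto
  then have "x \<in> body_tvars r"
    using b x unfolding body_tvars_def by blast
  moreover have head_tvars: "atom_tvars (snd r) = tt_vars s"
    using head by (cases "snd r") auto
  ultimately have "x \<in> tt_vars s"
    using conn r unfolding connected_def connected_rule_def by blast
  then have "\<bar>eval_t tv s' - eval_t tv s\<bar> = \<bar>delta s - delta s'\<bar>"
    using x by (simp add: eval_t_tvar)
  also have "\<dots> \<le> radius r"
    using head b body by (rule delta_diff_le_radius)
  also have "\<dots> \<le> max_radius \<Pi>"
    using fin r \<open>x \<in> tt_vars s\<close> head_tvars
    by (intro radius_le_max_radius) (auto simp: rule_tvars_def rule_atoms_def)
  finally show ?thesis .
qed

definition within_reach :: "('p,'o) rule set \<Rightarrow> int set \<Rightarrow> ('p,'o) fact \<Rightarrow> bool" where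
  "within_reach \<Pi> T f \<longleftrightarrow> (\<exists>Q os t \<tau>'. f = (Q, os, Some t) \<and> Q \<in> preds \<Pi> \<and> \<tau>' \<in> T \<and>
     \<bar>t - \<tau>'\<bar> \<le> max_radius \<Pi> * (int (prog_rank \<Pi>) - int (rank \<Pi> Q)))"

lemma within_reach_body:
  assumes fin: "finite \<Pi>" and nr: "nonrecursive \<Pi>" and conn: "connected \<Pi>"
    and norigid: "no_rigid_atoms \<Pi>" and T: "prog_tpoints \<Pi> \<subseteq> T"
    and r: "r \<in> \<Pi>" and b: "b \<in> set (fst r)"
    and head_reach: "within_reach \<Pi> T (eval_atom ov tv (snd r))"
  shows "within_reach \<Pi> T (eval_atom ov tv b)"
proof -
  let ?a = "max_radius \<Pi>" and ?R = "int (prog_rank \<Pi>)"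
  obtain Q ts s \<tau>' where head: "snd r = Atom Q ts (Some s)" and "\<tau>' \<in> T"
    and close: "\<bar>eval_t tv s - \<tau>'\<bar> \<le> ?a * (?R - int (rank \<Pi> Q))"
    using head_reach unfolding within_reach_def by (cases "snd r") auto
  have bp: "b \<in> prog_atoms \<Pi>"
    using r b unfolding prog_atoms_def rule_atoms_def by auto
  then obtain Qb tsb s' where bb: "b = Atom Qb tsb (Some s')"
    using norigid unfolding no_rigid_atoms_def by (cases b) auto
  have Qb: "Qb \<in> preds \<Pi>"
    using bp bb unfolding preds_def by force
  have "rank \<Pi> Qb < rank \<Pi> Q"
    using r head b bb by (intro rank_depends[OF fin nr]) (force simp: depends_def)
  then have "?R - int (rank \<Pi> Q) + 1 \<le> ?R - int (rank \<Pi> Qb)"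
    by simp
  then have "?a * (?R - int (rank \<Pi> Q) + 1) \<le> ?a * (?R - int (rank \<Pi> Qb))"
    using max_radius_nonneg[OF fin] by (rule mult_left_mono)
  then have step: "?a + ?a * (?R - int (rank \<Pi> Q)) \<le> ?a * (?R - int (rank \<Pi> Qb))"
    by (simp add: algebra_simps)
  show ?thesis
  proof (cases "tt_vars s' = {}")
    case True
    then obtain k where k: "s' = TConst k"
      by (cases s') auto
    then have "k \<in> T"
      using bp bb T unfolding prog_tpoints_def by force
    moreover have "0 \<le> ?a * (?R - int (rank \<Pi> Qb))"
      using max_radius_nonneg[OF fin] rank_le_prog_rank[OF fin Qb] by simp
    ultimately show ?thesis
      using bb k Qb unfolding within_reach_def by auto
  next
    case False
    then have "\<bar>eval_t tv s' - eval_t tv s\<bar> \<le> ?a"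
      using connected_body_time_near_head[OF fin conn r _ b] head bb by auto
    then have "\<bar>eval_t tv s' - \<tau>'\<bar> \<le> ?a * (?R - int (rank \<Pi> Qb))"
      using close step by linarith
    then show ?thesis
      using bb Qb \<open>\<tau>' \<in> T\<close> unfolding within_reach_def by auto
  qed
qed

lemma derivable_within_reach:
  assumes "finite \<Pi>" and "nonrecursive \<Pi>" and "connected \<Pi>"
    and "no_rigid_atoms \<Pi>" and "prog_tpoints \<Pi> \<subseteq> T"
  shows "derivable \<Pi> S f \<Longrightarrow> within_reach \<Pi> T f \<Longrightarrow>
    derivable \<Pi> {g \<in> S. within_reach \<Pi> T g} f"
proof (induction rule: derivable.induct)
  case (base f)
  then show ?case by (simp add: derivable.base)
next
  case (step r ov tv)
  then show ?case
    using within_reach_body[OF assms] by (auto intro: derivable.step)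
qed

lemma within_reach_update_bounded:
  assumes fin: "finite \<Pi>" and nr: "nonrecursive \<Pi>"
    and upd: "update sig edb \<tau>in U" and objs: "data_objs U \<subseteq> crit_domain \<Pi> D oI"
    and fU: "f \<in> U" and reach: "within_reach \<Pi> (insert \<tau>out (prog_tpoints \<Pi>)) f"
  shows "f \<in> bounded_update sig edb \<Pi> D \<tau>in \<tau>out oI"
proof -
  obtain Q os t \<tau>' where f: "f = (Q, os, Some t)" and Q: "Q \<in> preds \<Pi>"
    and \<tau>': "\<tau>' \<in> insert \<tau>out (prog_tpoints \<Pi>)"
    and close: "\<bar>t - \<tau>'\<bar> \<le> max_radius \<Pi> * (int (prog_rank \<Pi>) - int (rank \<Pi> Q))"
    using reach unfolding within_reach_def by blast
  have "\<tau>' \<le> tau0 \<Pi> \<tau>out"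
    using \<tau>' fin unfolding tau0_def by (simp add: finite_prog_tpoints)
  moreover have "max_radius \<Pi> * (int (prog_rank \<Pi>) - int (rank \<Pi> Q)) \<le> rad \<Pi>"
    using max_radius_nonneg[OF fin] prog_rank_le_card[OF fin nr]
    unfolding rad_def by (simp add: mult.commute mult_left_mono)
  ultimately have "t \<le> tau0 \<Pi> \<tau>out + rad \<Pi>"
    using close by linarith
  moreover have "\<tau>in < t" "edb Q" "wf_fact sig f"
    using fU upd f unfolding update_def dataset_def by fastforce+
  moreover have "set os \<subseteq> crit_domain \<Pi> D oI"
    using fU f objs unfolding data_objs_def by force
  ultimately show ?thesis
    using f Q unfolding bounded_update_def critical_def wf_fact_def by auto
qed

theorem lemma4:
  fixes sig :: "'p signature" and edb :: "'p \<Rightarrow> bool" and PQ :: 'p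
    and \<Pi> :: "('p,'o) rule set" and D U :: "('p,'o) fact set"
    and \<tau>in \<tau>out \<tau> \<tau>' :: int and oI :: 'o and P :: 'p and os :: "'o list"
  assumes inst: "DTP_instance sig edb PQ \<Pi> D \<tau>in \<tau>out"
    and nonrec: "nonrecursive \<Pi>"
    and conn: "connected \<Pi>"
    and norigid: "no_rigid_atoms \<Pi>"
    and fresh: "oI \<notin> prog_objs \<Pi> \<union> data_objs D"
    and upd: "update sig edb \<tau>in U"
    and updobjs: "data_objs U \<subseteq> crit_domain \<Pi> D oI"
    and Ppred: "P \<in> preds \<Pi>"
    and ent: "entails \<Pi> (D \<union> U) (P, os, Some \<tau>)"
    and T: "\<tau>' \<in> insert \<tau>out (prog_tpoints \<Pi>)"
    and dist: "\<bar>\<tau> - \<tau>'\<bar> \<le> max_radius \<Pi> * (int (prog_rank \<Pi>) - int (rank \<Pi> P))"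
  shows "entails \<Pi> (D \<union> bounded_update sig edb \<Pi> D \<tau>in \<tau>out oI) (P, os, Some \<tau>)"
proof -
  let ?T = "insert \<tau>out (prog_tpoints \<Pi>)" and ?B = "bounded_update sig edb \<Pi> D \<tau>in \<tau>out oI"
  have fin: "finite \<Pi>"
    using inst unfolding DTP_instance_def temporal_query_def program_def by blast
  have "derivable \<Pi> (D \<union> U) (P, os, Some \<tau>)"
    using ent by (simp add: entails_iff_derivable)
  moreover have "within_reach \<Pi> ?T (P, os, Some \<tau>)"
    using Ppred T dist unfolding within_reach_def by blast
  ultimately have "derivable \<Pi> {g \<in> D \<union> U. within_reach \<Pi> ?T g} (P, os, Some \<tau>)"
    by (rule derivable_within_reach[OF fin nonrec conn norigid subset_insertI])
  moreover have "{g \<in> D \<union> U. within_reach \<Pi> ?T g} \<subseteq> D \<union> ?B"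
    using within_reach_update_bounded[OF fin nonrec upd updobjs] by blast
  ultimately show ?thesis
    by (simp add: entails_iff_derivable derivable_mono)
qed

end
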